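(* Let $\mathcal X\subseteq\mathbb R^m$ be nonempty, convex and compact with diameter $D>0$, $F:\mathbb R^m\to\mathbb R^r$ affine, $C\in\mathbb R^{r\times n}$, $\Theta(x,y)=\frac12\|F(x)-Cy\|^2$, and let $L>0$ be such that for every $y\in\{0,1\}^n$, $\Theta(\cdot,y)$ is $L$-Lipschitz on $\mathcal X$ and $\|\nabla_x\Theta(x,y)\|\le L$ for $x\in\mathcal X$. Let $\operatorname{ALG}$ be a $\gamma$-approximation algorithm ($\gamma\in(0,1]$) for maximizing $\Theta(x,\cdot)$ over $\{0,1\}^n$, for every $x\in\mathcal X$. Given $\epsilon>0$, set $K=\lceil((D^2+L^2)/(2\epsilon))^2\rceil$, choose $x_0\in\mathcal X$, and for $k=0,\dots,K-1$ let $y_k=\operatorname{ALG}(\Theta(x_k,\cdot))$ and $x_{k+1}=\operatorname{Proj}_{\mathcal X}(x_k-K^{-1/2}\nabla_x\Theta(x_k,y_k))$. Let $\hat x=\frac1K\sum_{k=0}^{K-1}x_k$ and $\hat y=\operatorname{ALG}(\Theta(\hat x,\cdot))$. Then $(\hat x,\hat y)$ is a $(\gamma,\epsilon/\gamma)$-approximate minimax point of $\min_{x\in\mathcal X}\max_{y\in\{0,1\}^n}\Theta(x,y)$.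
   Context: $\operatorname{Proj}_{\mathcal X}$ is Euclidean projection onto $\mathcal X$. An algorithm is a $\gamma$-approximation algorithm for $\max_{y\in\mathcal Y}h(y)$ with nonnegative $h$ if on every instance it returns, in polynomial time, a feasible $\hat y\in\mathcal Y$ with $h(\hat y)\ge\gamma h(y^* )$ where $y^*$ is optimal. With $\mathcal Y=\{0,1\}^n$, a pair $(x^*,y^* )\in\mathcal X\times\mathcal Y$ is an $(\alpha,\epsilon)$-approximate minimax point ($\alpha\in(0,1]$, $\epsilon\ge0$) if $\alpha\max_{y\in\mathcal Y}\Theta(x^*,y)\le\Theta(x^*,y^* )\le\frac1\alpha\min_{x\in\mathcal X}\max_{y\in\mathcal Y}\Theta(x,y)+\epsilon$. *)

theory Defs
  imports "HOL-Analysis.Analysis"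
begin

definition binvecs :: "(real^'n) set" where
  "binvecs = {y. \<forall>i. y $ i = 0 \<or> y $ i = 1}"

definition grad :: "('a::real_inner \<Rightarrow> real) \<Rightarrow> 'a \<Rightarrow> 'a" where
  "grad f x = (SOME g. (f has_derivative (\<lambda>h. g \<bullet> h)) (at x))"

abbreviation Proj :: "'a::euclidean_space set \<Rightarrow> 'a \<Rightarrow> 'a" where
  "Proj X z \<equiv> closest_point X z"

definition approx_alg_on :: "real \<Rightarrow> ('b set) \<Rightarrow> (('b \<Rightarrow> real) \<Rightarrow> 'b) \<Rightarrow> ('b \<Rightarrow> real) \<Rightarrow> bool" where
  "approx_alg_on \<gamma> Y ALG h \<longleftrightarrow> ALG h \<in> Y \<and> (\<forall>y\<in>Y. \<gamma> * h y \<le> h (ALG h))"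

definition approx_minimax ::
  "('a \<Rightarrow> 'b \<Rightarrow> real) \<Rightarrow> 'a set \<Rightarrow> 'b set \<Rightarrow> real \<Rightarrow> real \<Rightarrow> 'a \<Rightarrow> 'b \<Rightarrow> bool" where
  "approx_minimax \<Theta> X Y \<alpha> \<epsilon> xs ys \<longleftrightarrow>
     xs \<in> X \<and> ys \<in> Y \<and>
     \<alpha> * (MAX y\<in>Y. \<Theta> xs y) \<le> \<Theta> xs ys \<and>
     \<Theta> xs ys \<le> (1/\<alpha>) * (INF x\<in>X. MAX y\<in>Y. \<Theta> x y) + \<epsilon>"

end

theory Submission
  imports Defs
begin

(* Each Theta(., w) is half the squared norm of an affine map, so it is convex and its gradient
   gives a supporting hyperplane. Projected subgradient descent with step 1/sqrt K against the
   losses Theta(., y_k) then has regret sum_k (Theta(x_k, y_k) - Theta(p, y_k)) <= (D^2 + L^2) sqrt K / 2,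
   which the choice of K makes at most K eps, for every p in X. By Jensen and the
   gamma-approximation at the iterates, gamma K Theta(xhat, yhat) <= gamma sum_k Theta(x_k, yhat)
   <= sum_k Theta(x_k, y_k) <= K (max_w Theta(p, w) + eps); the other inequality is the
   gamma-approximation at xhat itself. *)

lemma grad_eqI:
  assumes "(f has_derivative (\<lambda>h. g \<bullet> h)) (at x)"
  shows "grad f x = g"
  unfolding grad_def
proof (rule some_equality)
  fix g' assume "(f has_derivative (\<lambda>h. g' \<bullet> h)) (at x)"
  from has_derivative_unique[OF this assms]
  have "g' \<bullet> (g' - g) = g \<bullet> (g' - g)" by metis
  then have "(g' - g) \<bullet> (g' - g) = 0" by (simp add: inner_diff_left)
  then show "g' = g" by simp
qed (fact assms)

lemma half_sq_norm_affine_has_derivative: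
  fixes A :: "real^'m^'r" and c :: "real^'r"
  shows "((\<lambda>z. (1/2) * (norm (A *v z + c))\<^sup>2) has_derivative (\<lambda>h. ((A *v x + c) v* A) \<bullet> h)) (at x)"
proof -
  have affine: "((\<lambda>z. A *v z + c) has_derivative (\<lambda>h. A *v h)) (at x)"
    by (intro has_derivative_add_const
        bounded_linear.has_derivative[OF matrix_vector_mul_bounded_linear has_derivative_ident])
  have "((\<lambda>z. (1/2) * ((A *v z + c) \<bullet> (A *v z + c))) has_derivative
      (\<lambda>h. (1/2) * ((A *v x + c) \<bullet> (A *v h) + (A *v h) \<bullet> (A *v x + c)))) (at x)"
    by (intro has_derivative_mult_right has_derivative_inner affine)
  moreover have "(\<lambda>h. (1/2) * ((A *v x + c) \<bullet> (A *v h) + (A *v h) \<bullet> (A *v x + c)))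
      = (\<lambda>h. ((A *v x + c) v* A) \<bullet> h)"
    by (simp add: dot_lmul_matrix inner_commute[of "A *v _"])
  ultimately show ?thesis by (simp add: power2_norm_eq_inner)
qed

lemma grad_half_sq_norm_affine:
  fixes A :: "real^'m^'r" and c :: "real^'r"
  shows "grad (\<lambda>z. (1/2) * (norm (A *v z + c))\<^sup>2) x = (A *v x + c) v* A"
  by (rule grad_eqI[OF half_sq_norm_affine_has_derivative])

lemma half_sq_norm_affine_ge_tangent:
  fixes A :: "real^'m^'r" and c :: "real^'r"
  shows "(1/2) * (norm (A *v x + c))\<^sup>2 + ((A *v x + c) v* A) \<bullet> (p - x)
    \<le> (1/2) * (norm (A *v p + c))\<^sup>2"
proof -
  define r u where "r = A *v x + c" and "u = A *v (p - x)"
  have "A *v p + c = r + u"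
    unfolding r_def u_def by (simp add: matrix_vector_mult_diff_distrib)
  then have "(norm (A *v p + c))\<^sup>2 = (norm r)\<^sup>2 + 2 * (r \<bullet> u) + (norm u)\<^sup>2"
    by (simp add: power2_norm_eq_inner inner_add inner_commute)
  moreover have "r \<bullet> u = ((A *v x + c) v* A) \<bullet> (p - x)"
    unfolding r_def u_def by (simp add: dot_lmul_matrix)
  ultimately show ?thesis unfolding r_def by simp
qed

lemma convex_on_if_supporting_hyperplanes:
  fixes f :: "'a::real_inner \<Rightarrow> real"
  assumes "convex S"
    and supporting: "\<And>z. z \<in> S \<Longrightarrow> \<exists>g. \<forall>p\<in>S. f z + g \<bullet> (p - z) \<le> f p"
  shows "convex_on S f"
proof
  fix t :: real and x y assume t: "0 < t" "t < 1" and xy: "x \<in> S" "y \<in> S"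
  define z where "z = (1 - t) *\<^sub>R x + t *\<^sub>R y"
  have "z \<in> S" unfolding z_def using \<open>convex S\<close> t xy by (simp add: convexD)
  then obtain g where g: "\<And>p. p \<in> S \<Longrightarrow> f z + g \<bullet> (p - z) \<le> f p"
    using supporting by blast
  have "(1 - t) * (g \<bullet> (x - z)) + t * (g \<bullet> (y - z)) = 0"
    unfolding z_def by (simp add: inner_diff_right inner_add_right algebra_simps)
  moreover have "(1 - t) * (f z + g \<bullet> (x - z)) \<le> (1 - t) * f x"
    and "t * (f z + g \<bullet> (y - z)) \<le> t * f y"
    using g xy t by (simp_all add: mult_left_mono)
  ultimately show "f z \<le> (1 - t) * f x + t * f y" by (simp add: algebra_simps)
qed fact

lemma convex_on_mean_le:
  fixes x :: "nat \<Rightarrow> 'a::real_vector"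
  assumes "convex_on S f" "K > 0" "\<And>k. k < K \<Longrightarrow> x k \<in> S"
  shows "(1 / real K) *\<^sub>R (\<Sum>k<K. x k) \<in> S"
    and "real K * f ((1 / real K) *\<^sub>R (\<Sum>k<K. x k)) \<le> (\<Sum>k<K. f (x k))"
proof -
  have weights: "(\<Sum>k<K. 1 / real K) = 1" using \<open>K > 0\<close> by simp
  have mean: "(1 / real K) *\<^sub>R (\<Sum>k<K. x k) = (\<Sum>k<K. (1 / real K) *\<^sub>R x k)"
    by (simp add: scaleR_sum_right)
  show "(1 / real K) *\<^sub>R (\<Sum>k<K. x k) \<in> S"
    unfolding mean using assms convex_on_def
    by (intro convex_sum[OF _ _ weights]) auto
  have "f ((1 / real K) *\<^sub>R (\<Sum>k<K. x k)) \<le> (\<Sum>k<K. (1 / real K) * f (x k))"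
    unfolding mean using assms \<open>K > 0\<close> by (intro convex_on_sum[OF _ _ _ weights]) auto
  then show "real K * f ((1 / real K) *\<^sub>R (\<Sum>k<K. x k)) \<le> (\<Sum>k<K. f (x k))"
    using \<open>K > 0\<close> by (simp add: sum_divide_distrib[symmetric] field_simps)
qed

lemma closest_point_step_dist_le:
  fixes X :: "'a::euclidean_space set"
  assumes "convex X" "closed X" "X \<noteq> {}" "p \<in> X"
  shows "(norm (closest_point X (x - \<eta> *\<^sub>R g) - p))\<^sup>2
    \<le> (norm (x - p))\<^sup>2 - 2 * \<eta> * (g \<bullet> (x - p)) + \<eta>\<^sup>2 * (norm g)\<^sup>2"
proof -
  have "norm (closest_point X (x - \<eta> *\<^sub>R g) - p) \<le> norm ((x - p) - \<eta> *\<^sub>R g)"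
    using closest_point_lipschitz[OF assms(1-3), of "x - \<eta> *\<^sub>R g" p]
    by (simp add: closest_point_self[OF \<open>p \<in> X\<close>] dist_norm algebra_simps)
  then have "(norm (closest_point X (x - \<eta> *\<^sub>R g) - p))\<^sup>2 \<le> (norm ((x - p) - \<eta> *\<^sub>R g))\<^sup>2"
    by (simp add: power_mono)
  also have "\<dots> = (norm (x - p))\<^sup>2 - 2 * \<eta> * (g \<bullet> (x - p)) + \<eta>\<^sup>2 * (norm g)\<^sup>2"
    unfolding power2_norm_eq_inner
    by (simp add: inner_diff_left inner_diff_right inner_commute power2_eq_square algebra_simps)
  finally show ?thesis .
qed

lemma projected_subgradient_regret:
  fixes X :: "'a::euclidean_space set" and x g :: "nat \<Rightarrow> 'a" and f :: "nat \<Rightarrow> 'a \<Rightarrow> real"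
  assumes "convex X" "closed X" "X \<noteq> {}" "p \<in> X" "\<eta> \<ge> 0"
    and step: "\<And>k. k < K \<Longrightarrow> x (Suc k) = closest_point X (x k - \<eta> *\<^sub>R g k)"
    and bounded: "\<And>k. k < K \<Longrightarrow> norm (g k) \<le> L"
    and subgradient: "\<And>k. k < K \<Longrightarrow> f k (x k) + g k \<bullet> (p - x k) \<le> f k p"
  shows "2 * \<eta> * (\<Sum>k<K. f k (x k) - f k p) \<le> (norm (x 0 - p))\<^sup>2 + real K * \<eta>\<^sup>2 * L\<^sup>2"
proof -
  define d where "d k = (norm (x k - p))\<^sup>2" for k
  have "2 * \<eta> * (f k (x k) - f k p) \<le> d k - d (Suc k) + \<eta>\<^sup>2 * L\<^sup>2" if "k < K" for k
  proof -
    have "\<eta>\<^sup>2 * (norm (g k))\<^sup>2 \<le> \<eta>\<^sup>2 * L\<^sup>2"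
      using bounded[OF that] by (simp add: mult_left_mono power_mono)
    moreover have "f k (x k) - f k p \<le> g k \<bullet> (x k - p)"
      using subgradient[OF that] by (simp add: inner_diff_right)
    then have "2 * \<eta> * (f k (x k) - f k p) \<le> 2 * \<eta> * (g k \<bullet> (x k - p))"
      using \<open>\<eta> \<ge> 0\<close> by (simp add: mult_left_mono)
    ultimately show ?thesis
      using closest_point_step_dist_le[OF assms(1-4), of "x k" \<eta> "g k"]
      unfolding d_def step[OF that] by linarith
  qed
  then have "2 * \<eta> * (\<Sum>k<K. f k (x k) - f k p) \<le> (\<Sum>k<K. d k - d (Suc k) + \<eta>\<^sup>2 * L\<^sup>2)"
    unfolding sum_distrib_left by (intro sum_mono) simp
  also have "\<dots> = d 0 - d K + real K * \<eta>\<^sup>2 * L\<^sup>2"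
    by (simp add: sum.distrib sum_lessThan_telescope')
  also have "\<dots> \<le> d 0 + real K * \<eta>\<^sup>2 * L\<^sup>2"
    by (simp add: d_def)
  finally show ?thesis unfolding d_def .
qed

lemma sqrt_iterations_suffice:
  fixes c \<epsilon> :: real
  assumes "c \<ge> 0" "\<epsilon> > 0" "K = nat \<lceil>(c / (2 * \<epsilon>))\<^sup>2\<rceil>"
  shows "c * sqrt (real K) / 2 \<le> real K * \<epsilon>"
proof -
  have "(c / (2 * \<epsilon>))\<^sup>2 \<le> real K" using assms(3) by linarith
  then have "c / (2 * \<epsilon>) \<le> sqrt (real K)"
    using assms(1,2) real_le_rsqrt by simp
  then have "c / 2 \<le> \<epsilon> * sqrt (real K)"
    using assms(2) by (simp add: field_simps)
  then have "c / 2 * sqrt (real K) \<le> \<epsilon> * sqrt (real K) * sqrt (real K)"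
    by (rule mult_right_mono) simp
  also have "\<dots> = real K * \<epsilon>"
    by (simp add: mult.assoc)
  finally show ?thesis by simp
qed

lemma projected_subgradient_regret_le_eps:
  fixes X :: "'a::euclidean_space set" and x g :: "nat \<Rightarrow> 'a" and f :: "nat \<Rightarrow> 'a \<Rightarrow> real"
  assumes "convex X" "closed X" "X \<noteq> {}" "p \<in> X" "norm (x 0 - p) \<le> D" "\<epsilon> > 0"
    and K_def: "K = nat \<lceil>((D\<^sup>2 + L\<^sup>2) / (2 * \<epsilon>))\<^sup>2\<rceil>"
    and step: "\<And>k. k < K \<Longrightarrow> x (Suc k) = closest_point X (x k - (1 / sqrt (real K)) *\<^sub>R g k)"
    and bounded: "\<And>k. k < K \<Longrightarrow> norm (g k) \<le> L"
    and subgradient: "\<And>k. k < K \<Longrightarrow> f k (x k) + g k \<bullet> (p - x k) \<le> f k p"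
  shows "(\<Sum>k<K. f k (x k) - f k p) \<le> real K * \<epsilon>"
proof (cases "K = 0")
  case False
  have "2 * (1 / sqrt (real K)) * (\<Sum>k<K. f k (x k) - f k p)
      \<le> (norm (x 0 - p))\<^sup>2 + real K * (1 / sqrt (real K))\<^sup>2 * L\<^sup>2"
    using step bounded subgradient
    by (intro projected_subgradient_regret[OF assms(1-4), where x = x and g = g and f = f]) auto
  also have "\<dots> \<le> D\<^sup>2 + L\<^sup>2"
    using False \<open>norm (x 0 - p) \<le> D\<close> by (simp add: power_divide power_mono)
  finally have "(\<Sum>k<K. f k (x k) - f k p) \<le> (D\<^sup>2 + L\<^sup>2) * sqrt (real K) / 2"
    using False by (simp add: field_simps)
  also have "\<dots> \<le> real K * \<epsilon>"
    by (rule sqrt_iterations_suffice[OF _ \<open>\<epsilon> > 0\<close> K_def]) simp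
  finally show ?thesis .
qed simp

lemma approx_alg_on_Max_le:
  assumes "approx_alg_on \<gamma> Y ALG h" "finite Y" "Y \<noteq> {}"
  shows "\<gamma> * (MAX y\<in>Y. h y) \<le> h (ALG h)"
proof -
  have "(MAX y\<in>Y. h y) \<in> h ` Y"
    using assms(2,3) by (intro Max_in) auto
  then show ?thesis using assms(1) unfolding approx_alg_on_def by auto
qed

lemma approx_minimax_of_averaged_regret:
  fixes \<Theta> :: "'a::real_vector \<Rightarrow> 'b \<Rightarrow> real" and x :: "nat \<Rightarrow> 'a" and y :: "nat \<Rightarrow> 'b"
  assumes "finite Y" "Y \<noteq> {}" "K > 0" "\<gamma> > 0"
    and convex: "\<And>w. w \<in> Y \<Longrightarrow> convex_on X (\<lambda>z. \<Theta> z w)"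
    and iterates: "\<And>k. k < K \<Longrightarrow> x k \<in> X"
    and alg_approx: "\<And>z. z \<in> X \<Longrightarrow> approx_alg_on \<gamma> Y ALG (\<Theta> z)"
    and y_def: "\<And>k. k < K \<Longrightarrow> y k = ALG (\<Theta> (x k))"
    and regret: "\<And>p. p \<in> X \<Longrightarrow> (\<Sum>k<K. \<Theta> (x k) (y k) - \<Theta> p (y k)) \<le> real K * \<epsilon>"
    and xhat_def: "xhat = (1 / real K) *\<^sub>R (\<Sum>k<K. x k)"
    and yhat_def: "yhat = ALG (\<Theta> xhat)"
  shows "approx_minimax \<Theta> X Y \<gamma> (\<epsilon> / \<gamma>) xhat yhat"
proof -
  obtain w0 where "w0 \<in> Y" using \<open>Y \<noteq> {}\<close> by blast
  have xhat: "xhat \<in> X"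
    unfolding xhat_def by (rule convex_on_mean_le(1)[OF convex[OF \<open>w0 \<in> Y\<close>] \<open>K > 0\<close> iterates])
  have yhat: "yhat \<in> Y" "\<And>w. w \<in> Y \<Longrightarrow> \<gamma> * \<Theta> xhat w \<le> \<Theta> xhat yhat"
    using alg_approx[OF xhat] unfolding yhat_def approx_alg_on_def by auto
  have y: "y k \<in> Y" "\<And>w. w \<in> Y \<Longrightarrow> \<gamma> * \<Theta> (x k) w \<le> \<Theta> (x k) (y k)" if "k < K" for k
    using alg_approx[OF iterates[OF that]] y_def[OF that] unfolding approx_alg_on_def by auto
  have "\<gamma> * \<Theta> xhat yhat - \<epsilon> \<le> (MAX w\<in>Y. \<Theta> p w)" if "p \<in> X" for p
  proof -
    have "real K * \<Theta> xhat yhat \<le> (\<Sum>k<K. \<Theta> (x k) yhat)"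
      using convex_on_mean_le(2)[OF convex[OF yhat(1)] \<open>K > 0\<close>] iterates
      unfolding xhat_def by blast
    then have "real K * (\<gamma> * \<Theta> xhat yhat) \<le> \<gamma> * (\<Sum>k<K. \<Theta> (x k) yhat)"
      using \<open>\<gamma> > 0\<close> by (simp add: mult.left_commute)
    also have "\<dots> \<le> (\<Sum>k<K. \<Theta> (x k) (y k))"
      unfolding sum_distrib_left by (intro sum_mono) (simp add: y yhat(1))
    also have "\<dots> \<le> (\<Sum>k<K. \<Theta> p (y k)) + real K * \<epsilon>"
      using regret[OF that] by (simp add: sum_subtractf)
    also have "(\<Sum>k<K. \<Theta> p (y k)) \<le> (\<Sum>k<K. MAX w\<in>Y. \<Theta> p w)"
      by (intro sum_mono Max_ge) (simp_all add: \<open>finite Y\<close> y)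
    finally have "real K * (\<gamma> * \<Theta> xhat yhat) \<le> real K * ((MAX w\<in>Y. \<Theta> p w) + \<epsilon>)"
      by (simp add: algebra_simps)
    then show ?thesis
      using \<open>K > 0\<close> by simp
  qed
  then have "\<gamma> * \<Theta> xhat yhat - \<epsilon> \<le> (INF p\<in>X. MAX w\<in>Y. \<Theta> p w)"
    using xhat by (intro cINF_greatest) auto
  then have "\<Theta> xhat yhat \<le> (1 / \<gamma>) * (INF p\<in>X. MAX w\<in>Y. \<Theta> p w) + \<epsilon> / \<gamma>"
    using \<open>\<gamma> > 0\<close> by (simp add: field_simps)
  then show ?thesis
    unfolding approx_minimax_def
    using xhat yhat approx_alg_on_Max_le[OF alg_approx[OF xhat] \<open>finite Y\<close> \<open>Y \<noteq> {}\<close>]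
    by (simp add: yhat_def)
qed

lemma finite_binvecs: "finite (binvecs :: (real^'n) set)"
proof (rule finite_subset)
  show "(binvecs :: (real^'n) set) \<subseteq> vec_lambda ` (UNIV \<rightarrow>\<^sub>E {0, 1})"
  proof
    fix v :: "real^'n" assume "v \<in> binvecs"
    then have "vec_nth v \<in> UNIV \<rightarrow>\<^sub>E {0, 1}" unfolding binvecs_def by auto
    then show "v \<in> vec_lambda ` (UNIV \<rightarrow>\<^sub>E {0, 1})" by (metis image_eqI vec_nth_inverse)
  qed
qed (intro finite_imageI finite_PiE; simp)

lemma zero_in_binvecs: "0 \<in> binvecs"
  unfolding binvecs_def by simp

theorem mainTheorem6:
  fixes X :: "(real^'m) set" and F :: "real^'m \<Rightarrow> real^'r"
    and A :: "real^'m^'r" and b :: "real^'r" and C :: "real^'n^'r"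
    and \<Theta> :: "real^'m \<Rightarrow> real^'n \<Rightarrow> real"
    and D L \<gamma> \<epsilon> :: real and K :: nat
    and ALG :: "(real^'n \<Rightarrow> real) \<Rightarrow> real^'n"
    and x :: "nat \<Rightarrow> real^'m" and y :: "nat \<Rightarrow> real^'n"
    and xhat :: "real^'m" and yhat :: "real^'n"
  assumes X_ne: "X \<noteq> {}" and X_convex: "convex X" and X_compact: "compact X"
    and D_def: "D = diameter X" and D_pos: "D > 0"
    and F_affine: "\<forall>z. F z = A *v z + b"
    and Theta_def: "\<forall>z w. \<Theta> z w = (1/2) * (norm (F z - C *v w))\<^sup>2"
    and L_pos: "L > 0"
    and lip: "\<forall>w\<in>binvecs. L-lipschitz_on X (\<lambda>z. \<Theta> z w)"
    and grad_bd: "\<forall>w\<in>binvecs. \<forall>z\<in>X. norm (grad (\<lambda>z'. \<Theta> z' w) z) \<le> L"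
    and gamma: "0 < \<gamma>" "\<gamma> \<le> 1"
    and ALG: "\<forall>z\<in>X. approx_alg_on \<gamma> binvecs ALG (\<Theta> z)"
    and eps: "\<epsilon> > 0"
    and K_def: "K = nat \<lceil>((D\<^sup>2 + L\<^sup>2) / (2 * \<epsilon>))\<^sup>2\<rceil>"
    and x0: "x 0 \<in> X"
    and y_def: "\<forall>k<K. y k = ALG (\<Theta> (x k))"
    and x_step: "\<forall>k<K. x (Suc k) = Proj X (x k - (1 / sqrt (real K)) *\<^sub>R grad (\<lambda>z. \<Theta> z (y k)) (x k))"
    and xhat_def: "xhat = (1 / real K) *\<^sub>R (\<Sum>k<K. x k)"
    and yhat_def: "yhat = ALG (\<Theta> xhat)"
  shows "approx_minimax \<Theta> X binvecs \<gamma> (\<epsilon> / \<gamma>) xhat yhat"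
proof -
  have \<Theta>_eq: "\<Theta> z w = (1/2) * (norm (A *v z + (b - C *v w)))\<^sup>2" for z w
    using Theta_def F_affine by (simp add: add_diff_eq)
  have supporting: "\<Theta> z w + grad (\<lambda>z'. \<Theta> z' w) z \<bullet> (p - z) \<le> \<Theta> p w" for z p w
    unfolding \<Theta>_eq grad_half_sq_norm_affine by (rule half_sq_norm_affine_ge_tangent)
  have convex: "convex_on X (\<lambda>z. \<Theta> z w)" for w
    using X_convex supporting by (intro convex_on_if_supporting_hyperplanes) blast+
  have "closed X" "bounded X" using X_compact compact_imp_closed compact_imp_bounded by auto
  have iterates: "k \<le> K \<Longrightarrow> x k \<in> X" for k
    by (induction k) (use x0 x_step closest_point_in_set[OF \<open>closed X\<close> X_ne] in auto)
  have "K > 0"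
    using K_def eps L_pos by (simp add: add_nonneg_pos)
  have regret: "(\<Sum>k<K. \<Theta> (x k) (y k) - \<Theta> p (y k)) \<le> real K * \<epsilon>" if "p \<in> X" for p
  proof -
    have "y k \<in> binvecs" if "k < K" for k
      using ALG iterates that y_def unfolding approx_alg_on_def by auto
    moreover have "norm (x 0 - p) \<le> D"
      using diameter_bounded_bound[OF \<open>bounded X\<close> x0 \<open>p \<in> X\<close>] D_def by (simp add: dist_norm)
    ultimately show ?thesis
      using iterates grad_bd x_step supporting
      by (intro projected_subgradient_regret_le_eps[where g = "\<lambda>k. grad (\<lambda>z. \<Theta> z (y k)) (x k)",
          OF X_convex \<open>closed X\<close> X_ne \<open>p \<in> X\<close> _ eps K_def]) auto
  qed
  show ?thesis
    by (rule approx_minimax_of_averaged_regret[where x = x and y = y and K = K and ALG = ALG])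
      (use finite_binvecs zero_in_binvecs \<open>K > 0\<close> gamma(1) convex iterates ALG y_def regret
        xhat_def yhat_def in auto)
qed

end
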